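(* Let $X\subset\mathbb{R}^n$ be a closed set which is the closure of its interior, $f:X\to\mathbb{R}^n$ locally Lipschitz, and suppose $\dot x=f(x)$ is forward complete with flow $\varphi_t$. Let $K$ be a closed convex cone with nonempty interior and suppose the system is strongly monotone in reversed time: for every $\xi_1,\xi_2\in X$ and every $t<0$ such that $\varphi_t(\xi_1),\varphi_t(\xi_2)$ are defined, $\xi_1\succ\xi_2$ implies $\varphi_t(\xi_1)\gg\varphi_t(\xi_2)$. Let $v\in\operatorname{int}(K)$, $|v|=1$, with $X$ invariant under translation by $v$ and $\varphi_t(\xi+\lambda v)=\varphi_t(\xi)+\lambda v$ for all $\lambda\in\mathbb{R}$, $\xi\in X$ and all $t$ at which $\varphi_t(\xi)$ is defined. Let $\pi_v(x)=x-(v'x)v$. Then for every $\xi\in X$ such that $\pi_v(\varphi_t(\xi))$ is bounded for $t\ge0$, $\pi_v(\varphi_t(\xi))$ converges as $t\to\infty$ to an equilibrium of the projected system $\dot{\tilde x}=(I-vv')f(\tilde x)$ on $X\cap v^\perp$; moreover this equilibrium is unique (the projected system has no other equilibrium).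
   Context: The cone $K$ satisfies $K+K\subset K$, $\alpha K\subset K$ for $\alpha\ge0$, $K\cap(-K)=\{0\}$. $\xi_1\succeq\xi_2$ iff $\xi_1-\xi_2\in K$; $\xi_1\succ\xi_2$ iff additionally $\xi_1\neq\xi_2$; $\xi_1\gg\xi_2$ iff $\xi_1-\xi_2\in\operatorname{int}(K)$. Forward complete means every solution is uniquely defined in $X$ on an interval containing $[0,\infty)$ in its interior. *)

theory Defs
  imports "HOL-Analysis.Analysis"
begin

definition is_solution :: "('a::euclidean_space \<Rightarrow> 'a) \<Rightarrow> 'a set \<Rightarrow> real set \<Rightarrow> (real \<Rightarrow> 'a) \<Rightarrow> 'a \<Rightarrow> bool" where
  "is_solution f X I x \<xi> \<longleftrightarrow> is_interval I \<and> open I \<and> 0 \<in> I \<and> x 0 = \<xi> \<and>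
     (\<forall>t\<in>I. x t \<in> X \<and> (x has_vector_derivative f (x t)) (at t))"

definition forward_complete :: "('a::euclidean_space \<Rightarrow> 'a) \<Rightarrow> 'a set \<Rightarrow> bool" where
  "forward_complete f X \<longleftrightarrow>
     (\<forall>\<xi>\<in>X. \<exists>I x. is_solution f X I x \<xi> \<and> {0..} \<subseteq> I) \<and>
     (\<forall>\<xi> I1 x1 I2 x2. is_solution f X I1 x1 \<xi> \<longrightarrow> is_solution f X I2 x2 \<xi> \<longrightarrow>
        (\<forall>t\<in>I1 \<inter> I2. x1 t = x2 t))"

definition flow_defined :: "('a::euclidean_space \<Rightarrow> 'a) \<Rightarrow> 'a set \<Rightarrow> real \<Rightarrow> 'a \<Rightarrow> bool" where
  "flow_defined f X t \<xi> \<longleftrightarrow> (\<exists>I x. is_solution f X I x \<xi> \<and> t \<in> I)"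

definition flow :: "('a::euclidean_space \<Rightarrow> 'a) \<Rightarrow> 'a set \<Rightarrow> real \<Rightarrow> 'a \<Rightarrow> 'a" where
  "flow f X t \<xi> = (THE y. \<exists>I x. is_solution f X I x \<xi> \<and> t \<in> I \<and> x t = y)"

definition is_cone_K :: "'a::euclidean_space set \<Rightarrow> bool" where
  "is_cone_K K \<longleftrightarrow> (\<forall>a\<in>K. \<forall>b\<in>K. a + b \<in> K) \<and> (\<forall>\<alpha>\<ge>0. \<forall>a\<in>K. \<alpha> *\<^sub>R a \<in> K) \<and>
     K \<inter> uminus ` K = {0}"

definition succeq :: "'a::euclidean_space set \<Rightarrow> 'a \<Rightarrow> 'a \<Rightarrow> bool" where
  "succeq K a b \<longleftrightarrow> a - b \<in> K"

definition succ :: "'a::euclidean_space set \<Rightarrow> 'a \<Rightarrow> 'a \<Rightarrow> bool" where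
  "succ K a b \<longleftrightarrow> a - b \<in> K \<and> a \<noteq> b"

definition gg :: "'a::euclidean_space set \<Rightarrow> 'a \<Rightarrow> 'a \<Rightarrow> bool" where
  "gg K a b \<longleftrightarrow> a - b \<in> interior K"

definition proj_v :: "'a::euclidean_space \<Rightarrow> 'a \<Rightarrow> 'a" where
  "proj_v v x = x - (v \<bullet> x) *\<^sub>R v"

definition proj_equilibrium :: "('a::euclidean_space \<Rightarrow> 'a) \<Rightarrow> 'a set \<Rightarrow> 'a \<Rightarrow> 'a \<Rightarrow> bool" where
  "proj_equilibrium f X v e \<longleftrightarrow> e \<in> X \<and> v \<bullet> e = 0 \<and> f e - (v \<bullet> f e) *\<^sub>R v = 0"

end

(*
  Let gap a b be the least l with a <= b + l v in the order of K. It is Lipschitz, shifts by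
  constants under translation along v, and since the backward flow commutes with these
  translations, strong monotonicity makes gap (phi_s a) (phi_s b) <= gap a b for s < 0, with
  strict inequality unless a - b is a multiple of v.

  Along a forward trajectory x with bounded projection, u t = gap (x (t + d)) (x t) and
  w t = gap (x t) (x (t + d)) are therefore nondecreasing, u + w >= 0, and u + w is bounded,
  so u converges to some l. Because the backward flow is uniformly Lipschitz, translates of x
  along v at times tending to infinity converge to a limit solution z, along which
  gap (z s) (z (s - d)) = l for all s. Strictness then forces z s = z (s - d) + l v, hence w
  tends to -l along a sequence, so u 0 + w 0 <= 0 and x d - x 0 is a multiple of v. Thus the
  projected trajectory is constant and its value is an equilibrium of the projected system;
  two distinct equilibria would each have to drift faster along v than the other.
*)
theory Submission
  imports Defs
begin

lemma mono_on_tendsto_SUP: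
  fixes g :: "real \<Rightarrow> real"
  assumes mono: "mono_on {a..} g" and bdd: "bdd_above (g ` {a..})"
  shows "(g \<longlongrightarrow> (SUP t\<in>{a..}. g t)) at_top"
proof (rule order_tendstoI)
  fix y assume "y < (SUP t\<in>{a..}. g t)"
  then obtain t0 where t0: "a \<le> t0" "y < g t0"
    using less_cSUP_iff[OF _ bdd] by auto
  show "\<forall>\<^sub>F t in at_top. y < g t"
    using eventually_ge_at_top[of t0]
  proof eventually_elim
    case (elim t)
    with t0 have "g t0 \<le> g t" by (intro mono_onD[OF mono]) auto
    with t0 show ?case by simp
  qed
next
  fix y assume y: "(SUP t\<in>{a..}. g t) < y"
  show "\<forall>\<^sub>F t in at_top. g t < y"
    using eventually_ge_at_top[of a]
    by eventually_elim (use y cSUP_upper[OF _ bdd] in fastforce)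
qed

lemma proj_v_decompose: "y = proj_v v y + (v \<bullet> y) *\<^sub>R v"
  by (simp add: proj_v_def)

lemma proj_v_add_scaleR:
  assumes "norm v = 1"
  shows "proj_v v (y + c *\<^sub>R v) = proj_v v y"
  using assms by (simp add: proj_v_def norm_eq_1 inner_add_right algebra_simps)

lemma bounded_linear_proj_v: "bounded_linear (proj_v v)"
  unfolding proj_v_def[abs_def]
  using bounded_linear_compose[OF bounded_linear_scaleR_left bounded_linear_inner_right]
  by (intro bounded_linear_sub bounded_linear_ident) auto

locale order_unit =
  fixes K :: "'a::euclidean_space set" and v :: 'a
  assumes cone: "is_cone_K K" and closed_cone: "closed K" and unit_interior: "v \<in> interior K"
begin

lemma cone_add: "a \<in> K \<Longrightarrow> b \<in> K \<Longrightarrow> a + b \<in> K"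
  using cone unfolding is_cone_K_def by blast

lemma cone_scaleR: "0 \<le> c \<Longrightarrow> a \<in> K \<Longrightarrow> c *\<^sub>R a \<in> K"
  using cone unfolding is_cone_K_def by blast

lemma cone_pointed: "a \<in> K \<Longrightarrow> - a \<in> K \<Longrightarrow> a = 0"
  using cone unfolding is_cone_K_def by (metis IntI image_eqI minus_minus singletonD)

lemma zero_in_cone: "0 \<in> K"
  using cone unfolding is_cone_K_def by blast

lemma unit_in_cone: "v \<in> K"
  using unit_interior interior_subset by blast

lemma unit_nonzero: "v \<noteq> 0"
proof
  assume "v = 0"
  then obtain e where e: "e > 0" "ball 0 e \<subseteq> K"
    using unit_interior mem_interior by blast
  obtain b :: 'a where b: "b \<in> Basis"
    using nonempty_Basis by blast
  define a where "a = (e / 2) *\<^sub>R b"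
  have "a \<in> K" "- a \<in> K" "a \<noteq> 0"
    using e b by (auto simp: a_def intro!: subsetD[OF e(2)])
  then show False using cone_pointed by blast
qed

lemma scaleR_unit_in_cone_iff: "c *\<^sub>R v \<in> K \<longleftrightarrow> 0 \<le> c"
proof
  assume cv: "c *\<^sub>R v \<in> K"
  show "0 \<le> c"
  proof (rule ccontr)
    assume neg: "\<not> 0 \<le> c"
    have "(- 1 / c) *\<^sub>R (c *\<^sub>R v) \<in> K" by (rule cone_scaleR) (use cv neg in auto)
    moreover have "(- 1 / c) *\<^sub>R (c *\<^sub>R v) = - v" using neg by simp
    ultimately show False using cone_pointed unit_in_cone unit_nonzero by auto
  qed
next
  assume "0 \<le> c"
  then show "c *\<^sub>R v \<in> K" using cone_scaleR unit_in_cone by blast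
qed

lemma unit_absorbs:
  obtains r where "r > 0" and "\<And>d. (norm d / r) *\<^sub>R v + d \<in> K"
proof -
  obtain r where r: "r > 0" "ball v r \<subseteq> K"
    using unit_interior mem_interior by blast
  have "(norm d / (r / 2)) *\<^sub>R v + d \<in> K" for d
  proof (cases "d = 0")
    case False
    have "v + (r / 2 / norm d) *\<^sub>R d \<in> K"
      using r False by (intro subsetD[OF r(2)]) (simp add: dist_norm)
    then have "(norm d / (r / 2)) *\<^sub>R (v + (r / 2 / norm d) *\<^sub>R d) \<in> K"
      using r by (intro cone_scaleR) auto
    then show ?thesis using r False by (simp add: scaleR_add_right)
  qed (simp add: zero_in_cone)
  then show thesis using that r by (metis half_gt_zero)
qed

definition gap :: "'a \<Rightarrow> 'a \<Rightarrow> real" where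
  "gap a b = Inf {l. b + l *\<^sub>R v - a \<in> K}"

lemma gap_le_iff: "gap a b \<le> l \<longleftrightarrow> b + l *\<^sub>R v - a \<in> K"
proof -
  obtain r where r: "r > 0" "\<And>d. (norm d / r) *\<^sub>R v + d \<in> K"
    using unit_absorbs by blast
  define S where "S = {l. b + l *\<^sub>R v - a \<in> K}"
  have up: "l \<in> S" if "l' \<in> S" "l' \<le> l" for l l'
    using cone_add[OF _ cone_scaleR[OF _ unit_in_cone], of "b + l' *\<^sub>R v - a" "l - l'"] that
    by (simp add: S_def algebra_simps)
  have lower: "- norm (a - b) / r \<le> l" if "l \<in> S" for l
  proof -
    have "(l + norm (a - b) / r) *\<^sub>R v \<in> K"
      using cone_add[OF _ r(2)[of "a - b"], of "b + l *\<^sub>R v - a"] that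
      by (simp add: S_def algebra_simps)
    then show ?thesis using r(1) by (simp add: scaleR_unit_in_cone_iff field_simps)
  qed
  have "norm (b - a) / r \<in> S"
    using r(2)[of "b - a"] by (simp add: S_def algebra_simps)
  moreover have "closed S"
  proof -
    have "S = (\<lambda>l. b + l *\<^sub>R v - a) -` K" by (auto simp: S_def)
    then show ?thesis
      by (simp add: continuous_closed_vimage[OF closed_cone])
  qed
  ultimately have "gap a b \<in> S"
    unfolding gap_def S_def[symmetric] using lower
    by (intro closed_contains_Inf) (auto intro!: bdd_belowI)
  moreover have "gap a b \<le> l" if "l \<in> S" for l
    unfolding gap_def S_def[symmetric] using that lower
    by (intro cInf_lower) (auto intro!: bdd_belowI)
  ultimately show ?thesis using up unfolding S_def by blast
qed

lemma gap_mem: "b + gap a b *\<^sub>R v - a \<in> K"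
  using gap_le_iff by blast

lemma gap_less:
  assumes "b + l *\<^sub>R v - a \<in> interior K"
  shows "gap a b < l"
proof -
  obtain e where e: "e > 0" "ball (b + l *\<^sub>R v - a) e \<subseteq> K"
    using assms mem_interior by blast
  define d where "d = e / (2 * norm v)"
  have d: "d > 0" "norm (d *\<^sub>R v) < e"
    using e unit_nonzero by (auto simp: d_def)
  have "b + (l - d) *\<^sub>R v - a \<in> ball (b + l *\<^sub>R v - a) e"
    using d by (simp add: dist_norm algebra_simps)
  then have "gap a b \<le> l - d"
    using e(2) gap_le_iff by blast
  then show ?thesis using d by simp
qed

lemma gap_translate: "gap (a + \<alpha> *\<^sub>R v) (b + \<beta> *\<^sub>R v) = gap a b + \<alpha> - \<beta>"
proof -
  have "gap (a + \<alpha> *\<^sub>R v) (b + \<beta> *\<^sub>R v) \<le> l \<longleftrightarrow> gap a b + \<alpha> - \<beta> \<le> l" for l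
  proof -
    have "b + \<beta> *\<^sub>R v + l *\<^sub>R v - (a + \<alpha> *\<^sub>R v) = b + (l - \<alpha> + \<beta>) *\<^sub>R v - a"
      by (simp add: algebra_simps)
    then have "gap (a + \<alpha> *\<^sub>R v) (b + \<beta> *\<^sub>R v) \<le> l \<longleftrightarrow> gap a b \<le> l - \<alpha> + \<beta>"
      by (simp only: gap_le_iff)
    then show ?thesis by linarith
  qed
  from this[of "gap a b + \<alpha> - \<beta>"] this[of "gap (a + \<alpha> *\<^sub>R v) (b + \<beta> *\<^sub>R v)"]
  show ?thesis by linarith
qed

lemma gap_triangle: "gap a c \<le> gap a b + gap b c"
proof -
  have "c + (gap a b + gap b c) *\<^sub>R v - a \<in> K"
    using cone_add[OF gap_mem[where a=a and b=b] gap_mem[where a=b and b=c]]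
    by (simp add: algebra_simps)
  then show ?thesis by (simp add: gap_le_iff)
qed

lemma gap_swap_nonneg: "0 \<le> gap a b + gap b a"
proof -
  have "(gap a b + gap b a) *\<^sub>R v \<in> K"
    using cone_add[OF gap_mem[where a=a and b=b] gap_mem[where a=b and b=a]]
    by (simp add: algebra_simps)
  then show ?thesis by (simp add: scaleR_unit_in_cone_iff)
qed

lemma gap_self: "gap a a = 0"
  using gap_swap_nonneg[of a a] gap_le_iff[of a a 0] zero_in_cone by simp

lemma gap_translate_self: "gap a (a + c *\<^sub>R v) = - c"
  using gap_translate[of a 0 a c] gap_self by simp

lemma gap_swap_eq_zero:
  assumes "gap a b + gap b a = 0"
  shows "a = b + gap a b *\<^sub>R v"
proof -
  have "gap b a = - gap a b" using assms by linarith
  then have "a + gap b a *\<^sub>R v - b = - (b + gap a b *\<^sub>R v - a)"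
    by (simp add: algebra_simps)
  then have "- (b + gap a b *\<^sub>R v - a) \<in> K"
    using gap_mem[where a=b and b=a] by (simp only:)
  then have "b + gap a b *\<^sub>R v - a = 0"
    by (rule cone_pointed[OF gap_mem])
  then show ?thesis by (simp add: right_minus_eq)
qed

lemma gap_le_lipschitz:
  obtains L where "\<And>a b. gap a b \<le> L * norm (a - b)"
proof -
  obtain r where r: "r > 0" "\<And>d. (norm d / r) *\<^sub>R v + d \<in> K"
    using unit_absorbs by blast
  have "gap a b \<le> (1 / r) * norm (a - b)" for a b
    using r(2)[of "b - a"] by (simp add: gap_le_iff norm_minus_commute algebra_simps)
  then show thesis by (rule that)
qed

lemma gap_lipschitz:
  obtains L where "\<And>a b a' b'. \<bar>gap a b - gap a' b'\<bar> \<le> L * (norm (a - a') + norm (b - b'))"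
proof -
  obtain L where le: "\<And>a b. gap a b \<le> L * norm (a - b)"
    using gap_le_lipschitz by blast
  have "\<bar>gap a b - gap a' b'\<bar> \<le> L * (norm (a - a') + norm (b - b'))" for a b a' b'
  proof -
    have "gap a b \<le> gap a a' + gap a' b' + gap b' b"
      using gap_triangle[where a=a and b=a' and c=b] gap_triangle[where a=a' and b=b' and c=b]
      by linarith
    moreover have "gap a' b' \<le> gap a' a + gap a b + gap b b'"
      using gap_triangle[where a=a' and b=a and c=b'] gap_triangle[where a=a and b=b and c=b']
      by linarith
    moreover note le[of a a'] le[of b' b] le[of a' a] le[of b b']
    ultimately show ?thesis
      by (simp add: norm_minus_commute abs_le_iff distrib_left)
  qed
  then show thesis by (rule that)
qed

lemma tendsto_gap [tendsto_intros]:
  assumes "(g \<longlongrightarrow> a) F" and "(h \<longlongrightarrow> b) F"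
  shows "((\<lambda>x. gap (g x) (h x)) \<longlongrightarrow> gap a b) F"
proof -
  obtain L where L: "\<And>a b a' b'. \<bar>gap a b - gap a' b'\<bar> \<le> L * (norm (a - a') + norm (b - b'))"
    using gap_lipschitz by blast
  have "((\<lambda>x. L * (norm (g x - a) + norm (h x - b))) \<longlongrightarrow> L * (norm (a - a) + norm (b - b))) F"
    using assms by (intro tendsto_intros)
  then have lim0: "((\<lambda>x. L * (norm (g x - a) + norm (h x - b))) \<longlongrightarrow> 0) F"
    by simp
  have "\<forall>x. norm (gap (g x) (h x) - gap a b) \<le> L * (norm (g x - a) + norm (h x - b))"
    using L by simp
  from Lim_null_comparison[OF always_eventually[OF this] lim0]
  have "((\<lambda>x. gap (g x) (h x) - gap a b) \<longlongrightarrow> 0) F" .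
  then show ?thesis by (rule LIM_zero_cancel)
qed

lemma continuous_on_gap [continuous_intros]:
  "continuous_on S g \<Longrightarrow> continuous_on S h \<Longrightarrow> continuous_on S (\<lambda>x. gap (g x) (h x))"
  unfolding continuous_on_def by (auto intro: tendsto_gap)

text \<open>Normality of the cone: a closed pointed cone has bounded order intervals.\<close>
lemma norm_le_gap:
  obtains M where "M > 0" and "\<And>a b. norm (a - b) \<le> M * max (gap a b) (gap b a)"
proof -
  have "sgn v \<in> sphere 0 1"
    using unit_nonzero by (simp add: norm_sgn)
  then have "sphere (0::'a) 1 \<noteq> {}" by blast
  moreover have "continuous_on (sphere 0 1) (\<lambda>u. max (gap u 0) (gap 0 u))"
    by (intro continuous_on_max continuous_on_gap continuous_on_id continuous_on_const)
  ultimately obtain u0 where u0: "u0 \<in> sphere 0 1"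
    and min: "\<forall>u \<in> sphere 0 1. max (gap u0 0) (gap 0 u0) \<le> max (gap u 0) (gap 0 u)"
    using continuous_attains_inf[OF compact_sphere] by blast
  define m where "m = max (gap u0 0) (gap 0 u0)"
  have "m > 0"
  proof (rule ccontr)
    assume "\<not> m > 0"
    then have "gap u0 0 + gap 0 u0 = 0" "gap u0 0 = 0"
      using gap_swap_nonneg[of u0 0] unfolding m_def by linarith+
    then have "u0 = 0" using gap_swap_eq_zero by fastforce
    then show False using u0 by simp
  qed
  have "norm (a - b) \<le> (1 / m) * max (gap a b) (gap b a)" for a b
  proof (cases "a = b")
    case False
    define \<rho> where "\<rho> = max (gap a b) (gap b a)"
    define u where "u = (1 / norm (a - b)) *\<^sub>R (a - b)"
    have "(1 / norm (a - b)) *\<^sub>R (b + \<rho> *\<^sub>R v - a) \<in> K"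
      by (rule cone_scaleR) (auto simp: \<rho>_def gap_le_iff[symmetric])
    then have "gap u 0 \<le> \<rho> / norm (a - b)"
      by (simp add: gap_le_iff u_def algebra_simps)
    moreover have "(1 / norm (a - b)) *\<^sub>R (a + \<rho> *\<^sub>R v - b) \<in> K"
      by (rule cone_scaleR) (auto simp: \<rho>_def gap_le_iff[symmetric])
    then have "gap 0 u \<le> \<rho> / norm (a - b)"
      by (simp add: gap_le_iff u_def algebra_simps)
    moreover have "u \<in> sphere 0 1" using False by (simp add: u_def)
    ultimately have "m \<le> \<rho> / norm (a - b)"
      using min unfolding m_def by fastforce
    then show ?thesis using \<open>m > 0\<close> False by (simp add: \<rho>_def field_simps)
  qed (simp add: gap_self)
  with \<open>m > 0\<close> show thesis by (intro that[of "1 / m"]) auto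
qed

end

definition solves :: "('a::real_normed_vector \<Rightarrow> 'a) \<Rightarrow> 'a set \<Rightarrow> real set \<Rightarrow> (real \<Rightarrow> 'a) \<Rightarrow> bool" where
  "solves f X S x \<longleftrightarrow> (\<forall>t\<in>S. x t \<in> X \<and> (x has_vector_derivative f (x t)) (at t))"

lemma is_solution_iff_solves:
  "is_solution f X I x \<xi> \<longleftrightarrow> is_interval I \<and> open I \<and> 0 \<in> I \<and> x 0 = \<xi> \<and> solves f X I x"
  by (auto simp: is_solution_def solves_def)

lemma solves_shift:
  assumes "solves f X S x"
  shows "solves f X ((+) (- s) ` S) (\<lambda>t. x (t + s))"
  unfolding solves_def
proof
  fix t assume "t \<in> (+) (- s) ` S"
  then have ts: "t + s \<in> S" by auto
  have "((\<lambda>t. t + s) has_vector_derivative 1) (at t)"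
    by (auto intro!: derivative_eq_intros simp flip: has_real_derivative_iff_has_vector_derivative)
  from vector_diff_chain_at[OF this] assms ts
  show "x (t + s) \<in> X \<and> ((\<lambda>t. x (t + s)) has_vector_derivative f (x (t + s))) (at t)"
    by (auto simp: solves_def o_def)
qed

lemma flow_eq_solution:
  assumes "forward_complete f X" and "is_solution f X I x \<xi>" and "t \<in> I"
  shows "flow_defined f X t \<xi>" and "flow f X t \<xi> = x t"
proof -
  show "flow_defined f X t \<xi>"
    using assms unfolding flow_defined_def by blast
  have "y = x t" if "is_solution f X I' x' \<xi>" "t \<in> I'" "x' t = y" for I' x' y
    using assms that unfolding forward_complete_def by blast
  then show "flow f X t \<xi> = x t"
    unfolding flow_def using assms(2,3) by (intro the_equality) blast+
qed

lemma flow_along_solves: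
  assumes "forward_complete f X" and "solves f X S x" and "is_interval S" and "open S"
    and "s \<in> S" and "s + t \<in> S"
  shows "flow_defined f X t (x s)" and "flow f X t (x s) = x (s + t)"
proof -
  have "is_solution f X ((+) (- s) ` S) (\<lambda>t. x (t + s)) (x s)"
    unfolding is_solution_iff_solves
    using assms solves_shift[OF assms(2)] open_translation[OF assms(4), of "- s"] by force
  moreover have "t \<in> (+) (- s) ` S"
    using assms(6) by (force intro: image_eqI[of _ _ "s + t"])
  ultimately show "flow_defined f X t (x s)" "flow f X t (x s) = x (s + t)"
    using flow_eq_solution[OF assms(1)] by (auto simp: add.commute)
qed

lemma has_vector_derivative_uniform_limit:
  fixes Y :: "nat \<Rightarrow> real \<Rightarrow> 'a::banach"
  assumes "open S" and "convex S"
    and der: "\<And>n t. t \<in> S \<Longrightarrow> (Y n has_vector_derivative Y' n t) (at t)"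
    and Y'_lim: "uniform_limit S Y' z' sequentially"
    and Y_lim: "\<And>t. t \<in> S \<Longrightarrow> (\<lambda>n. Y n t) \<longlonglongrightarrow> z t"
    and "t \<in> S"
  shows "(z has_vector_derivative z' t) (at t)"
proof -
  have close: "\<forall>\<^sub>F n in sequentially. \<forall>t\<in>S. \<forall>h. norm (h *\<^sub>R Y' n t - h *\<^sub>R z' t) \<le> e * norm h"
    if "e > 0" for e
  proof -
    have "\<forall>\<^sub>F n in sequentially. \<forall>t\<in>S. dist (Y' n t) (z' t) < e"
      using Y'_lim that unfolding uniform_limit_iff by blast
    then show ?thesis
    proof (rule eventually_mono)
      fix n assume n: "\<forall>t\<in>S. dist (Y' n t) (z' t) < e"
      show "\<forall>t\<in>S. \<forall>h. norm (h *\<^sub>R Y' n t - h *\<^sub>R z' t) \<le> e * norm h"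
      proof (intro ballI allI)
        fix t h assume "t \<in> S"
        then have "\<bar>h\<bar> * norm (Y' n t - z' t) \<le> \<bar>h\<bar> * e"
          using n by (intro mult_left_mono) (auto simp: dist_norm)
        then show "norm (h *\<^sub>R Y' n t - h *\<^sub>R z' t) \<le> e * norm h"
          by (simp add: mult.commute flip: scaleR_diff_right)
      qed
    qed
  qed
  have "\<And>n t. t \<in> S \<Longrightarrow> (Y n has_derivative (\<lambda>h. h *\<^sub>R Y' n t)) (at t within S)"
    using der by (auto simp: has_vector_derivative_def intro: has_derivative_at_withinI)
  from has_derivative_sequence[OF \<open>convex S\<close> this close \<open>t \<in> S\<close> Y_lim[OF \<open>t \<in> S\<close>]]
  obtain g where g: "\<forall>t\<in>S. (\<lambda>n. Y n t) \<longlonglongrightarrow> g t \<and> (g has_derivative (\<lambda>h. h *\<^sub>R z' t)) (at t within S)"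
    by blast
  have gz: "g s = z s" if "s \<in> S" for s
    using g that Y_lim[OF that] LIMSEQ_unique by blast
  have "(g has_vector_derivative z' t) (at t)"
    using g \<open>t \<in> S\<close> at_within_open[OF \<open>t \<in> S\<close> \<open>open S\<close>] by (auto simp: has_vector_derivative_def)
  then show ?thesis
    by (rule has_vector_derivative_transform_within_open[OF _ \<open>open S\<close> \<open>t \<in> S\<close> gz])
qed

lemma solves_uniform_limit_compact:
  fixes Y :: "nat \<Rightarrow> real \<Rightarrow> 'a::banach"
  assumes "open S" and "convex S" and sol: "\<And>n. solves f X S (Y n)"
    and lim: "uniform_limit S Y z sequentially"
    and "compact C" and "C \<subseteq> X" and "continuous_on C f"
    and YC: "\<forall>\<^sub>F n in sequentially. \<forall>t\<in>S. Y n t \<in> C"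
  shows "solves f X S z"
  unfolding solves_def
proof
  fix t assume t: "t \<in> S"
  have z_lim: "(\<lambda>n. Y n s) \<longlonglongrightarrow> z s" if "s \<in> S" for s
    using lim that by (rule tendsto_uniform_limitI)
  have "z t \<in> C"
    by (rule Lim_in_closed_set[OF compact_imp_closed[OF \<open>compact C\<close>] _ _ z_lim[OF t]])
      (use YC t in \<open>auto elim: eventually_mono\<close>)
  moreover have "uniform_limit S (\<lambda>n t. f (Y n t)) (\<lambda>t. f (z t)) sequentially"
    by (rule uniform_limit_compose_uniformly_continuous_on[OF lim
          compact_uniformly_continuous[OF \<open>continuous_on C f\<close> \<open>compact C\<close>]
          YC compact_imp_closed[OF \<open>compact C\<close>]])
  then have "(z has_vector_derivative f (z t)) (at t)"
    using sol z_lim t \<open>open S\<close> \<open>convex S\<close>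
    by (intro has_vector_derivative_uniform_limit[where Y=Y]) (auto simp: solves_def)
  ultimately show "z t \<in> X \<and> (z has_vector_derivative f (z t)) (at t)"
    using \<open>C \<subseteq> X\<close> by blast
qed

lemma solves_uniform_limit:
  fixes Y :: "nat \<Rightarrow> real \<Rightarrow> 'a::euclidean_space"
  assumes "open S" and "convex S" and sol: "\<And>n. solves f X S (Y n)"
    and bounded: "\<And>n. bounded (Y n ` S)"
    and lim: "uniform_limit S Y z sequentially"
    and "closed X" and "continuous_on X f"
  shows "solves f X S z"
proof -
  have "bounded (z ` S)"
    using bounded by (intro uniform_limit_bounded[OF lim]) auto
  then obtain R where R: "\<And>t. t \<in> S \<Longrightarrow> norm (z t) \<le> R"
    unfolding bounded_iff by blast
  have "\<forall>\<^sub>F n in sequentially. \<forall>t\<in>S. Y n t \<in> X \<inter> cball 0 (R + 1)"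
    using uniform_limitD[OF lim zero_less_one]
  proof eventually_elim
    case (elim n)
    have "norm (Y n t) \<le> R + 1" if "t \<in> S" for t
      using elim R[OF that] norm_triangle_sub[of "Y n t" "z t"] that by (auto simp: dist_norm)
    then show ?case
      using sol by (auto simp: solves_def)
  qed
  moreover have "compact (X \<inter> cball 0 (R + 1))"
    by (rule closed_Int_compact[OF \<open>closed X\<close> compact_cball])
  moreover have "continuous_on (X \<inter> cball 0 (R + 1)) f"
    by (rule continuous_on_subset[OF \<open>continuous_on X f\<close>]) blast
  ultimately show ?thesis
    by (intro solves_uniform_limit_compact[OF \<open>open S\<close> \<open>convex S\<close> sol lim]) auto
qed

locale monotone_system = order_unit K v
  for K :: "'a::euclidean_space set" and v :: 'a +
  fixes f :: "'a \<Rightarrow> 'a" and X :: "'a set"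
  assumes closed_state_space: "closed X"
    and continuous_field: "continuous_on X f"
    and forward_complete: "forward_complete f X"
    and strongly_monotone_backward: "\<And>\<xi>1 \<xi>2 t. \<xi>1 \<in> X \<Longrightarrow> \<xi>2 \<in> X \<Longrightarrow> t < 0 \<Longrightarrow>
        flow_defined f X t \<xi>1 \<Longrightarrow> flow_defined f X t \<xi>2 \<Longrightarrow>
        succ K \<xi>1 \<xi>2 \<Longrightarrow> gg K (flow f X t \<xi>1) (flow f X t \<xi>2)"
    and unit_norm: "norm v = 1"
    and translate_state: "\<And>\<xi> c. \<xi> \<in> X \<Longrightarrow> \<xi> + c *\<^sub>R v \<in> X"
    and translate_flow: "\<And>\<xi> c t. \<xi> \<in> X \<Longrightarrow> flow_defined f X t \<xi> \<Longrightarrow>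
        flow_defined f X t (\<xi> + c *\<^sub>R v) \<and>
        flow f X t (\<xi> + c *\<^sub>R v) = flow f X t \<xi> + c *\<^sub>R v"
begin

lemma field_translate:
  assumes "y \<in> X"
  shows "f (y + c *\<^sub>R v) = f y"
proof -
  obtain I x where x: "is_solution f X I x y"
    using forward_complete assms unfolding forward_complete_def by blast
  obtain I' x' where x': "is_solution f X I' x' (y + c *\<^sub>R v)"
    using forward_complete translate_state[OF assms] unfolding forward_complete_def by blast
  have S: "open (I \<inter> I')" "0 \<in> I \<inter> I'"
    using x x' unfolding is_solution_def by auto
  have shift: "x t + c *\<^sub>R v = x' t" if t: "t \<in> I \<inter> I'" for t
  proof -
    have "flow_defined f X t y" "flow f X t y = x t"
      using flow_eq_solution[OF forward_complete x] t by auto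
    moreover have "flow f X t (y + c *\<^sub>R v) = x' t"
      using flow_eq_solution[OF forward_complete x'] t by auto
    ultimately show ?thesis
      using translate_flow[OF assms, of t c] by simp
  qed
  have "((\<lambda>t. x t + c *\<^sub>R v) has_vector_derivative f y) (at 0)"
    using x S unfolding is_solution_def by (auto intro!: derivative_eq_intros)
  then have "(x' has_vector_derivative f y) (at 0)"
    by (rule has_vector_derivative_transform_within_open[OF _ S shift])
  moreover have "(x' has_vector_derivative f (y + c *\<^sub>R v)) (at 0)"
    using x' S unfolding is_solution_def by auto
  ultimately show ?thesis
    using vector_derivative_unique_at by metis
qed

lemma solves_translate:
  assumes "solves f X S x"
  shows "solves f X S (\<lambda>t. x t + c *\<^sub>R v)"
  using assms translate_state field_translate
  by (auto simp: solves_def intro!: derivative_eq_intros)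

lemma backward_flow_preserves_order:
  assumes "a \<in> X" "b \<in> X" "s < 0" "flow_defined f X s a" "flow_defined f X s b"
    and "b + l *\<^sub>R v - a \<in> K"
  shows "flow f X s b + l *\<^sub>R v - flow f X s a \<in> K"
    and "b + l *\<^sub>R v \<noteq> a \<Longrightarrow> flow f X s b + l *\<^sub>R v - flow f X s a \<in> interior K"
proof -
  have shifted: "flow_defined f X s (b + l *\<^sub>R v)"
      "flow f X s (b + l *\<^sub>R v) = flow f X s b + l *\<^sub>R v"
    using translate_flow[OF assms(2,5)] by auto
  show strict: "flow f X s b + l *\<^sub>R v - flow f X s a \<in> interior K" if "b + l *\<^sub>R v \<noteq> a"
    using strongly_monotone_backward[OF translate_state[OF assms(2)] assms(1,3) shifted(1) assms(4)]
      assms(6) that shifted(2)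
    by (simp add: succ_def gg_def)
  show "flow f X s b + l *\<^sub>R v - flow f X s a \<in> K"
  proof (cases "b + l *\<^sub>R v = a")
    case True
    then show ?thesis using shifted(2) zero_in_cone by (metis diff_self)
  next
    case False
    then show ?thesis using strict interior_subset by blast
  qed
qed

lemma gap_backward_flow_le:
  assumes "a \<in> X" "b \<in> X" "s < 0" "flow_defined f X s a" "flow_defined f X s b"
  shows "gap (flow f X s a) (flow f X s b) \<le> gap a b"
  using backward_flow_preserves_order(1)[OF assms gap_mem] gap_le_iff by blast

lemma gap_backward_flow_less:
  assumes "a \<in> X" "b \<in> X" "s < 0" "flow_defined f X s a" "flow_defined f X s b"
    and "b + gap a b *\<^sub>R v \<noteq> a"
  shows "gap (flow f X s a) (flow f X s b) < gap a b"
  using backward_flow_preserves_order(2)[OF assms(1-5) gap_mem assms(6)] by (rule gap_less)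

lemma backward_flow_lipschitz:
  obtains L where "\<And>a b s. a \<in> X \<Longrightarrow> b \<in> X \<Longrightarrow> s < 0 \<Longrightarrow>
      flow_defined f X s a \<Longrightarrow> flow_defined f X s b \<Longrightarrow>
      norm (flow f X s a - flow f X s b) \<le> L * norm (a - b)"
proof -
  obtain M where M: "M > 0" "\<And>a b. norm (a - b) \<le> M * max (gap a b) (gap b a)"
    using norm_le_gap by blast
  obtain L where gap_le: "\<And>a b. gap a b \<le> L * norm (a - b)"
    using gap_le_lipschitz by blast
  have "norm (flow f X s a - flow f X s b) \<le> (M * L) * norm (a - b)"
    if "a \<in> X" "b \<in> X" "s < 0" "flow_defined f X s a" "flow_defined f X s b" for a b s
  proof -
    have "norm (flow f X s a - flow f X s b)
        \<le> M * max (gap (flow f X s a) (flow f X s b)) (gap (flow f X s b) (flow f X s a))"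
      by (rule M(2))
    also have "\<dots> \<le> M * max (gap a b) (gap b a)"
      using gap_backward_flow_le[OF that] gap_backward_flow_le[OF that(2,1,3,5,4)] M(1)
      by (intro mult_left_mono max.mono) auto
    also have "\<dots> \<le> M * (L * norm (a - b))"
      using gap_le[of a b] gap_le[of b a] M(1)
      by (intro mult_left_mono) (auto simp: norm_minus_commute)
    finally show ?thesis by simp
  qed
  then show thesis by (rule that)
qed

lemma constant_gap_imp_translate:
  assumes z1: "solves f X S z1" and z2: "solves f X S z2" and S: "is_interval S" "open S"
    and "s \<in> S" "s' \<in> S" "s' < s"
    and const: "gap (z1 s') (z2 s') = gap (z1 s) (z2 s)"
  shows "z1 s = z2 s + gap (z1 s) (z2 s) *\<^sub>R v"
proof (rule ccontr)
  assume "z1 s \<noteq> z2 s + gap (z1 s) (z2 s) *\<^sub>R v"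
  moreover note flow1 = flow_along_solves[OF forward_complete z1 S \<open>s \<in> S\<close>, of "s' - s"]
    and flow2 = flow_along_solves[OF forward_complete z2 S \<open>s \<in> S\<close>, of "s' - s"]
  moreover have "z1 s \<in> X" "z2 s \<in> X"
    using z1 z2 \<open>s \<in> S\<close> by (auto simp: solves_def)
  ultimately have "gap (flow f X (s' - s) (z1 s)) (flow f X (s' - s) (z2 s)) < gap (z1 s) (z2 s)"
    using \<open>s' \<in> S\<close> \<open>s' < s\<close> by (intro gap_backward_flow_less) auto
  then show False
    using flow1 flow2 \<open>s' \<in> S\<close> const by simp
qed

lemma proj_equilibrium_solution:
  assumes "proj_equilibrium f X v e"
  shows "is_solution f X UNIV (\<lambda>t. e + (t * (v \<bullet> f e)) *\<^sub>R v) e"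
proof -
  have e: "e \<in> X" "f e = (v \<bullet> f e) *\<^sub>R v"
    using assms unfolding proj_equilibrium_def by auto
  have "((\<lambda>t. e + (t * (v \<bullet> f e)) *\<^sub>R v)
      has_vector_derivative f (e + (t * (v \<bullet> f e)) *\<^sub>R v)) (at t)" for t
    using field_translate[OF e(1)] e(2) by (auto intro!: derivative_eq_intros)
  then show ?thesis
    using translate_state[OF e(1)] by (auto simp: is_solution_iff_solves solves_def)
qed

lemma proj_equilibrium_unique:
  assumes e1: "proj_equilibrium f X v e1" and e2: "proj_equilibrium f X v e2"
  shows "e1 = e2"
proof (rule ccontr)
  assume ne: "e1 \<noteq> e2"
  have speed_less: "v \<bullet> f b < v \<bullet> f a"
    if a: "proj_equilibrium f X v a" and b: "proj_equilibrium f X v b" and "a \<noteq> b" for a b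
  proof -
    have X: "a \<in> X" "b \<in> X" and perp: "v \<bullet> a = 0" "v \<bullet> b = 0"
      using a b unfolding proj_equilibrium_def by auto
    have not_translate: "b + gap a b *\<^sub>R v \<noteq> a"
    proof
      assume "b + gap a b *\<^sub>R v = a"
      moreover from arg_cong[OF this, of "inner v"]
      have "v \<bullet> b + gap a b * (v \<bullet> v) = v \<bullet> a"
        by (simp only: inner_add_right inner_scaleR_right)
      then have "gap a b = 0"
        using perp unit_norm by (auto simp: norm_eq_1)
      ultimately show False using \<open>a \<noteq> b\<close> by simp
    qed
    have flow_a: "flow_defined f X (-1) a" "flow f X (-1) a = a + (- (v \<bullet> f a)) *\<^sub>R v"
      using flow_eq_solution[OF forward_complete proj_equilibrium_solution[OF a], of "-1"] by auto
    have flow_b: "flow_defined f X (-1) b" "flow f X (-1) b = b + (- (v \<bullet> f b)) *\<^sub>R v"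
      using flow_eq_solution[OF forward_complete proj_equilibrium_solution[OF b], of "-1"] by auto
    have "gap (flow f X (-1) a) (flow f X (-1) b) < gap a b"
      by (rule gap_backward_flow_less[OF X _ flow_a(1) flow_b(1) not_translate]) simp
    then show ?thesis
      unfolding flow_a(2) flow_b(2) gap_translate by simp
  qed
  from speed_less[OF e1 e2 ne] speed_less[OF e2 e1 ne[symmetric]] show False by simp
qed

end

locale forward_trajectory = monotone_system K v f X
  for K :: "'a::euclidean_space set" and v f X +
  fixes I :: "real set" and x :: "real \<Rightarrow> 'a"
  assumes trajectory_solves: "solves f X I x"
    and trajectory_interval: "is_interval I" "open I"
    and nonneg_times: "{0..} \<subseteq> I"
begin

lemma trajectory_in_state_space: "0 \<le> t \<Longrightarrow> x t \<in> X"
  using trajectory_solves nonneg_times by (auto simp: solves_def)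

lemma trajectory_flow:
  assumes "0 \<le> t" and "0 \<le> t + s"
  shows "flow_defined f X s (x t + c *\<^sub>R v)" and "flow f X s (x t + c *\<^sub>R v) = x (t + s) + c *\<^sub>R v"
  using flow_along_solves[OF forward_complete solves_translate[OF trajectory_solves]
      trajectory_interval, of t s] assms nonneg_times by auto

lemma gap_trajectory_mono:
  assumes "0 \<le> s" "s \<le> t" "0 \<le> d1" "0 \<le> d2"
  shows "gap (x (s + d1)) (x (s + d2)) \<le> gap (x (t + d1)) (x (t + d2))"
proof (cases "s = t")
  case False
  have "flow_defined f X (s - t) (x (t + d))" "flow f X (s - t) (x (t + d)) = x (s + d)"
    if "0 \<le> d" for d
    using trajectory_flow[of "t + d" "s - t" 0] assms that by (simp_all add: algebra_simps)
  with gap_backward_flow_le[of "x (t + d1)" "x (t + d2)" "s - t"] False assms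
  show ?thesis by (simp add: trajectory_in_state_space)
qed simp

lemma trajectory_bounded_on: "0 \<le> a \<Longrightarrow> bounded (x ` {a..b})"
proof -
  assume "0 \<le> a"
  have "continuous_on I x"
    using trajectory_solves
    by (intro continuous_on_vector_derivative)
      (auto simp: solves_def intro: has_vector_derivative_at_within)
  moreover have "{a..b} \<subseteq> I"
    using \<open>0 \<le> a\<close> nonneg_times by auto
  ultimately have "continuous_on {a..b} x"
    by (rule continuous_on_subset)
  then show ?thesis
    by (rule compact_imp_bounded[OF compact_continuous_image[OF _ compact_Icc]])
qed

lemma solves_shifted_trajectory:
  assumes "l \<le> T"
  shows "solves f X {-l<..<0} (\<lambda>\<sigma>. x (T + \<sigma>) + c *\<^sub>R v)"
proof -
  have "{-l<..<0} \<subseteq> (+) (- T) ` I"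
    using assms nonneg_times by (force intro: image_eqI[of _ _ "T + _"])
  then show ?thesis
    using solves_shift[where s=T, OF solves_translate[where c=c, OF trajectory_solves]]
    by (auto simp: solves_def add.commute)
qed

lemma shifted_trajectory_bounded:
  assumes "l \<le> T"
  shows "bounded ((\<lambda>\<sigma>. x (T + \<sigma>) + c *\<^sub>R v) ` {-l<..<0})"
proof -
  have "(\<lambda>\<sigma>. x (T + \<sigma>) + c *\<^sub>R v) ` {-l<..<0} \<subseteq> (\<lambda>y. c *\<^sub>R v + y) ` x ` {T - l..T}"
    by (auto intro!: image_eqI[OF _ imageI[of "T + _"]])
  moreover have "bounded (x ` {T - l..T})"
    using assms by (intro trajectory_bounded_on) simp
  ultimately show ?thesis
    by (meson bounded_subset bounded_translation)
qed

lemma shifted_trajectories_uniformly_Cauchy: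
  assumes T: "\<And>k. l \<le> T k" and Cauchy: "Cauchy (\<lambda>k. x (T k) + c k *\<^sub>R v)"
  shows "uniformly_Cauchy_on {-l<..<0} (\<lambda>k \<sigma>. x (T k + \<sigma>) + c k *\<^sub>R v)"
proof (rule uniformly_Cauchy_onI)
  fix e :: real assume "e > 0"
  define Y where "Y k \<sigma> = x (T k + \<sigma>) + c k *\<^sub>R v" for k \<sigma>
  obtain L where L: "\<And>a b s. a \<in> X \<Longrightarrow> b \<in> X \<Longrightarrow> s < 0 \<Longrightarrow>
      flow_defined f X s a \<Longrightarrow> flow_defined f X s b \<Longrightarrow>
      norm (flow f X s a - flow f X s b) \<le> L * norm (a - b)"
    using backward_flow_lipschitz by blast
  have Y_lip: "dist (Y j \<sigma>) (Y k \<sigma>) \<le> \<bar>L\<bar> * norm (Y j 0 - Y k 0)" if "\<sigma> \<in> {-l<..<0}" for j k \<sigma>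
  proof -
    have times: "0 \<le> T i" "0 \<le> T i + \<sigma>" for i
      using T[of i] that by auto
    have "Y i 0 \<in> X" for i
      using translate_state[OF trajectory_in_state_space[OF times(1)]] by (simp add: Y_def)
    then have "dist (Y j \<sigma>) (Y k \<sigma>) \<le> L * norm (Y j 0 - Y k 0)"
      using L[of "Y j 0" "Y k 0" \<sigma>] trajectory_flow[OF times] that
      by (simp add: Y_def dist_norm)
    also have "\<dots> \<le> \<bar>L\<bar> * norm (Y j 0 - Y k 0)"
      by (intro mult_right_mono) auto
    finally show ?thesis .
  qed
  have "e / (\<bar>L\<bar> + 1) > 0"
    using \<open>e > 0\<close> by simp
  with Cauchy obtain M where M: "\<And>m n. M \<le> m \<Longrightarrow> M \<le> n \<Longrightarrow> norm (Y m 0 - Y n 0) < e / (\<bar>L\<bar> + 1)"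
    unfolding Cauchy_def by (simp add: Y_def dist_norm) blast
  have "dist (Y m \<sigma>) (Y n \<sigma>) < e" if "\<sigma> \<in> {-l<..<0}" "M \<le> m" "M \<le> n" for \<sigma> m n
  proof -
    have "dist (Y m \<sigma>) (Y n \<sigma>) \<le> \<bar>L\<bar> * (e / (\<bar>L\<bar> + 1))"
      using Y_lip[OF that(1), of m n] M[OF that(2,3)]
      by (meson abs_ge_zero less_imp_le mult_left_mono order.trans)
    also have "\<dots> < e"
      using \<open>e > 0\<close> by (simp add: field_simps)
    finally show ?thesis .
  qed
  then show "\<exists>M. \<forall>\<sigma>\<in>{-l<..<0}. \<forall>m\<ge>M. \<forall>n\<ge>M.
      dist (x (T m + \<sigma>) + c m *\<^sub>R v) (x (T n + \<sigma>) + c n *\<^sub>R v) < e"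
    unfolding Y_def by blast
qed

lemma omega_limit_solution:
  assumes T: "\<And>k. l \<le> T k" and lim: "(\<lambda>k. x (T k) + c k *\<^sub>R v) \<longlonglongrightarrow> p"
  obtains z where "solves f X {-l<..<0} z"
    and "\<And>\<sigma>. \<sigma> \<in> {-l<..<0} \<Longrightarrow> (\<lambda>k. x (T k + \<sigma>) + c k *\<^sub>R v) \<longlonglongrightarrow> z \<sigma>"
proof -
  obtain z where z: "uniform_limit {-l<..<0} (\<lambda>k \<sigma>. x (T k + \<sigma>) + c k *\<^sub>R v) z sequentially"
    using Cauchy_uniformly_convergent[OF
        shifted_trajectories_uniformly_Cauchy[OF T LIMSEQ_imp_Cauchy[OF lim]]]
    unfolding uniformly_convergent_on_def by blast
  have "solves f X {-l<..<0} z"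
    using solves_shifted_trajectory[OF T] shifted_trajectory_bounded[OF T] closed_state_space
      continuous_field
    by (intro solves_uniform_limit[OF _ _ _ _ z]) auto
  moreover have "(\<lambda>k. x (T k + \<sigma>) + c k *\<^sub>R v) \<longlonglongrightarrow> z \<sigma>" if "\<sigma> \<in> {-l<..<0}" for \<sigma>
    using tendsto_uniform_limitI[OF z that] .
  ultimately show thesis
    by (rule that)
qed

end

locale bounded_projected_trajectory = forward_trajectory K v f X I x
  for K :: "'a::euclidean_space set" and v f X I x +
  fixes P :: real
  assumes bounded_projection: "\<And>t. 0 \<le> t \<Longrightarrow> norm (proj_v v (x t)) \<le> P"
begin

lemma omega_limit_solution_at_infinity:
  obtains T z c where "filterlim T at_top sequentially" and "\<And>k. l \<le> T k"
    and "solves f X {-l<..<0} z"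
    and "\<And>\<sigma>. \<sigma> \<in> {-l<..<0} \<Longrightarrow> (\<lambda>k. x (T k + \<sigma>) + c k *\<^sub>R v) \<longlonglongrightarrow> z \<sigma>"
proof -
  define t where "t k = real k + \<bar>l\<bar>" for k :: nat
  have "proj_v v (x (t k)) \<in> cball 0 P" for k
    using bounded_projection[of "t k"] by (simp add: t_def)
  then obtain p r where r: "strict_mono r" and lim: "((\<lambda>k. proj_v v (x (t k))) \<circ> r) \<longlonglongrightarrow> p"
    using seq_compactE[OF compact_imp_seq_compact[OF compact_cball]] by metis
  define T where "T = t \<circ> r"
  define c where "c k = - (v \<bullet> x (T k))" for k
  have T_ge: "l \<le> T k" for k
    by (simp add: T_def t_def)
  have "(\<lambda>k. x (T k) + c k *\<^sub>R v) \<longlonglongrightarrow> p"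
    using lim by (simp add: T_def c_def proj_v_def o_def)
  then obtain z where "solves f X {-l<..<0} z"
    and "\<And>\<sigma>. \<sigma> \<in> {-l<..<0} \<Longrightarrow> (\<lambda>k. x (T k + \<sigma>) + c k *\<^sub>R v) \<longlonglongrightarrow> z \<sigma>"
    using omega_limit_solution[where T=T and c=c, OF T_ge] by blast
  moreover have "filterlim T at_top sequentially"
  proof (rule filterlim_at_top_mono[OF filterlim_real_sequentially])
    have "real k \<le> T k" for k
      using seq_suble[OF r, of k] by (simp add: T_def t_def add_increasing2)
    then show "\<forall>\<^sub>F k in sequentially. real k \<le> T k"
      by simp
  qed
  ultimately show thesis
    using that T_ge by blast
qed

lemma gap_swap_trajectory_bounded:
  obtains B where "\<And>s t. 0 \<le> s \<Longrightarrow> 0 \<le> t \<Longrightarrow> gap (x s) (x t) + gap (x t) (x s) \<le> B"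
proof -
  obtain L where L: "\<And>a b. gap a b \<le> L * norm (a - b)"
    using gap_le_lipschitz by blast
  have proj_gap: "gap (x s) (x t) \<le> \<bar>L\<bar> * (2 * P) + (v \<bullet> x s) - (v \<bullet> x t)"
    if "0 \<le> s" "0 \<le> t" for s t
  proof -
    have "gap (x s) (x t) = gap (proj_v v (x s)) (proj_v v (x t)) + (v \<bullet> x s) - (v \<bullet> x t)"
      using gap_translate[of "proj_v v (x s)" "v \<bullet> x s" "proj_v v (x t)" "v \<bullet> x t"]
      by (simp flip: proj_v_decompose)
    also have "gap (proj_v v (x s)) (proj_v v (x t)) \<le> \<bar>L\<bar> * norm (proj_v v (x s) - proj_v v (x t))"
      using L by (meson abs_ge_self mult_right_mono norm_ge_zero order.trans)
    also have "\<dots> \<le> \<bar>L\<bar> * (2 * P)"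
      using bounded_projection[OF that(1)] bounded_projection[OF that(2)]
        norm_triangle_ineq4[of "proj_v v (x s)" "proj_v v (x t)"]
      by (intro mult_left_mono) auto
    finally show ?thesis by simp
  qed
  have "gap (x s) (x t) + gap (x t) (x s) \<le> 4 * \<bar>L\<bar> * P" if "0 \<le> s" "0 \<le> t" for s t
    using proj_gap[OF that] proj_gap[OF that(2,1)] by linarith
  then show thesis by (rule that)
qed

lemma gap_trajectory_limit:
  assumes "0 \<le> \<delta>"
  obtains l where "((\<lambda>t. gap (x (t + \<delta>)) (x t)) \<longlongrightarrow> l) at_top" and "gap (x \<delta>) (x 0) \<le> l"
proof -
  define u where "u t = gap (x (t + \<delta>)) (x t)" for t
  obtain B where B: "\<And>s t. 0 \<le> s \<Longrightarrow> 0 \<le> t \<Longrightarrow> gap (x s) (x t) + gap (x t) (x s) \<le> B"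
    using gap_swap_trajectory_bounded by blast
  have u_mono: "mono_on {0..} u"
    using gap_trajectory_mono[of _ _ \<delta> 0] \<open>0 \<le> \<delta>\<close> by (auto simp: u_def mono_on_def)
  have "u t \<le> B - gap (x 0) (x \<delta>)" if "t \<in> {0..}" for t
    using B[of "t + \<delta>" t] gap_trajectory_mono[of 0 t 0 \<delta>] that \<open>0 \<le> \<delta>\<close> by (simp add: u_def)
  then have bdd: "bdd_above (u ` {0..})"
    by (rule bdd_aboveI2)
  show thesis
  proof (rule that)
    show "((\<lambda>t. gap (x (t + \<delta>)) (x t)) \<longlongrightarrow> (SUP t\<in>{0..}. u t)) at_top"
      using mono_on_tendsto_SUP[OF u_mono bdd] unfolding u_def .
    show "gap (x \<delta>) (x 0) \<le> (SUP t\<in>{0..}. u t)"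
      using cSUP_upper[OF _ bdd, of 0] by (simp add: u_def)
  qed
qed

lemma reverse_gap_limit:
  assumes "0 < \<delta>" and u_lim: "((\<lambda>t. gap (x (t + \<delta>)) (x t)) \<longlongrightarrow> l) at_top"
  obtains s where "\<And>k. 0 \<le> s k" and "(\<lambda>k. gap (x (s k)) (x (s k + \<delta>))) \<longlonglongrightarrow> - l"
proof (rule omega_limit_solution_at_infinity[where l="\<delta> + 2"])
  fix T z c
  assume T_lim: "filterlim T at_top sequentially" and T_ge: "\<And>k. \<delta> + 2 \<le> T k"
    and z: "solves f X {-(\<delta> + 2)<..<0} z"
    and z_lim: "\<And>\<sigma>. \<sigma> \<in> {-(\<delta> + 2)<..<0} \<Longrightarrow> (\<lambda>k. x (T k + \<sigma>) + c k *\<^sub>R v) \<longlonglongrightarrow> z \<sigma>"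
  have pair_lim: "(\<lambda>k. gap (x (T k + \<sigma>)) (x (T k + \<sigma>'))) \<longlonglongrightarrow> gap (z \<sigma>) (z \<sigma>')"
    if "\<sigma> \<in> {-(\<delta> + 2)<..<0}" "\<sigma>' \<in> {-(\<delta> + 2)<..<0}" for \<sigma> \<sigma>'
    using tendsto_gap[OF z_lim[OF that(1)] z_lim[OF that(2)]] by (simp add: gap_translate)
  have gap_z: "gap (z \<sigma>) (z (\<sigma> - \<delta>)) = l" if "\<sigma> \<in> {-2<..<0}" for \<sigma>
  proof -
    have "filterlim (\<lambda>k. (\<sigma> - \<delta>) + T k) at_top sequentially"
      by (rule filterlim_tendsto_add_at_top[OF tendsto_const T_lim])
    from filterlim_compose[OF u_lim this]
    have "(\<lambda>k. gap (x (T k + \<sigma>)) (x (T k + (\<sigma> - \<delta>)))) \<longlonglongrightarrow> l"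
      by (simp add: algebra_simps)
    moreover have "(\<lambda>k. gap (x (T k + \<sigma>)) (x (T k + (\<sigma> - \<delta>)))) \<longlonglongrightarrow> gap (z \<sigma>) (z (\<sigma> - \<delta>))"
      using that \<open>0 < \<delta>\<close> by (intro pair_lim) auto
    ultimately show ?thesis
      using LIMSEQ_unique by blast
  qed
  have "solves f X {-2<..<0} (\<lambda>\<sigma>. z (\<sigma> - \<delta>))"
  proof -
    have "{-2<..<0} \<subseteq> (+) (- (- \<delta>)) ` {-(\<delta> + 2)<..<0}"
      using \<open>0 < \<delta>\<close> by (force intro: image_eqI[of _ _ "_ - \<delta>"])
    then show ?thesis
      using solves_shift[OF z, of "- \<delta>"] by (auto simp: solves_def)
  qed
  moreover have "solves f X {-2<..<0} z"
    using z \<open>0 < \<delta>\<close> by (auto simp: solves_def)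
  ultimately have translate: "z (-1/2) = z (-1/2 - \<delta>) + l *\<^sub>R v"
    using constant_gap_imp_translate[of "{-2<..<0}" z "\<lambda>\<sigma>. z (\<sigma> - \<delta>)" "-1/2" "-1"]
      gap_z[of "-1/2"] gap_z[of "-1"] by simp
  have "gap (z (-1/2 - \<delta>)) (z (-1/2)) = - l"
    unfolding translate by (rule gap_translate_self)
  then have "(\<lambda>k. gap (x (T k + (-1/2 - \<delta>))) (x (T k + (-1/2 - \<delta>) + \<delta>))) \<longlonglongrightarrow> - l"
    using pair_lim[of "-1/2 - \<delta>" "-1/2"] \<open>0 < \<delta>\<close> by (simp add: add.assoc)
  moreover have "0 \<le> T k + (-1/2 - \<delta>)" for k
    using T_ge[of k] by simp
  ultimately show thesis
    by (rule that[rotated])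
qed

lemma trajectory_translate_of_start:
  assumes "0 < \<delta>"
  shows "x \<delta> = x 0 + gap (x \<delta>) (x 0) *\<^sub>R v"
proof -
  obtain l where u_lim: "((\<lambda>t. gap (x (t + \<delta>)) (x t)) \<longlongrightarrow> l) at_top"
    and u_0: "gap (x \<delta>) (x 0) \<le> l"
    using gap_trajectory_limit \<open>0 < \<delta>\<close> by (metis less_imp_le)
  obtain s where s: "\<And>k. 0 \<le> s k" and w_lim: "(\<lambda>k. gap (x (s k)) (x (s k + \<delta>))) \<longlonglongrightarrow> - l"
    using reverse_gap_limit[OF \<open>0 < \<delta>\<close> u_lim] by blast
  have "gap (x 0) (x \<delta>) \<le> - l"
    using s \<open>0 < \<delta>\<close> gap_trajectory_mono[of 0 _ 0 \<delta>]
    by (intro LIMSEQ_le_const[OF w_lim]) auto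
  then have "gap (x \<delta>) (x 0) + gap (x 0) (x \<delta>) = 0"
    using u_0 gap_swap_nonneg[of "x \<delta>" "x 0"] by linarith
  then show ?thesis
    by (rule gap_swap_eq_zero)
qed

lemma projection_constant:
  assumes "0 \<le> t"
  shows "proj_v v (x t) = proj_v v (x 0)"
proof (cases "t = 0")
  case False
  then show ?thesis
    using trajectory_translate_of_start[of t] \<open>0 \<le> t\<close> proj_v_add_scaleR[OF unit_norm]
    by (metis order_le_less)
qed simp

lemma projection_of_start_is_equilibrium:
  shows "proj_equilibrium f X v (proj_v v (x 0))"
proof -
  have x0: "x 0 \<in> X"
    by (rule trajectory_in_state_space) simp
  have "proj_v v (f (x 0)) = 0"
  proof -
    have "(x has_vector_derivative f (x 0)) (at 0)"
      using trajectory_solves nonneg_times by (auto simp: solves_def)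
    then have derivative:
        "((\<lambda>t. proj_v v (x t)) has_vector_derivative proj_v v (f (x 0))) (at 0 within {0..1})"
      by (rule bounded_linear.has_vector_derivative[OF bounded_linear_proj_v
            has_vector_derivative_at_within])
    have const: "proj_v v (x 0) = proj_v v (x t)" if "t \<in> {0..1}" for t
      using projection_constant[of t] that by simp
    have "((\<lambda>t. proj_v v (x t)) has_vector_derivative 0) (at 0 within {0..1})"
      by (rule has_vector_derivative_transform_within[OF has_vector_derivative_const
            zero_less_one _ const]) simp_all
    with derivative show ?thesis
      using vector_derivative_unique_within_closed_interval[of 0 1 0] by simp
  qed
  moreover have "proj_v v (x 0) \<in> X" "f (proj_v v (x 0)) = f (x 0)"
    using translate_state[OF x0, of "- (v \<bullet> x 0)"] field_translate[OF x0, of "- (v \<bullet> x 0)"]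
    by (simp_all add: proj_v_def)
  moreover have "v \<bullet> proj_v v (x 0) = 0"
    using unit_norm by (simp add: proj_v_def inner_diff_right norm_eq_1)
  ultimately show ?thesis
    by (simp add: proj_equilibrium_def proj_v_def)
qed

end

theorem corollary2:
  fixes f :: "'a::euclidean_space \<Rightarrow> 'a" and X K :: "'a set" and v :: 'a
  assumes X_closed: "closed X" and X_reg: "X = closure (interior X)"
    and f_lip: "local_lipschitz (UNIV::real set) X (\<lambda>_. f)"
    and fc: "forward_complete f X"
    and K_cone: "is_cone_K K" and K_closed: "closed K" and K_convex: "convex K"
    and K_int: "interior K \<noteq> {}"
    and mono: "\<And>\<xi>1 \<xi>2 t. \<xi>1 \<in> X \<Longrightarrow> \<xi>2 \<in> X \<Longrightarrow> t < 0 \<Longrightarrow>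
        flow_defined f X t \<xi>1 \<Longrightarrow> flow_defined f X t \<xi>2 \<Longrightarrow>
        succ K \<xi>1 \<xi>2 \<Longrightarrow> gg K (flow f X t \<xi>1) (flow f X t \<xi>2)"
    and v_int: "v \<in> interior K" and v_norm: "norm v = 1"
    and X_transl: "\<And>\<xi> c. \<xi> \<in> X \<Longrightarrow> \<xi> + c *\<^sub>R v \<in> X"
    and flow_transl: "\<And>\<xi> c t. \<xi> \<in> X \<Longrightarrow> flow_defined f X t \<xi> \<Longrightarrow>
        flow_defined f X t (\<xi> + c *\<^sub>R v) \<and>
        flow f X t (\<xi> + c *\<^sub>R v) = flow f X t \<xi> + c *\<^sub>R v"
  shows "\<forall>\<xi>\<in>X. bounded ((\<lambda>t. proj_v v (flow f X t \<xi>)) ` {0..}) \<longrightarrow>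
           (\<exists>e. proj_equilibrium f X v e \<and>
                ((\<lambda>t. proj_v v (flow f X t \<xi>)) \<longlongrightarrow> e) at_top \<and>
                (\<forall>e'. proj_equilibrium f X v e' \<longrightarrow> e' = e))"
proof (intro ballI impI)
  fix \<xi> assume "\<xi> \<in> X" and bounded: "bounded ((\<lambda>t. proj_v v (flow f X t \<xi>)) ` {0..})"
  have "continuous_on X f"
    using local_lipschitz_continuous_on[OF f_lip, of 0] by simp
  then interpret monotone_system K v f X
    using assms by unfold_locales auto
  obtain I x where x: "is_solution f X I x \<xi>" and "{0..} \<subseteq> I"
    using fc \<open>\<xi> \<in> X\<close> unfolding forward_complete_def by blast
  have flow_x: "flow f X t \<xi> = x t" if "0 \<le> t" for t
    using flow_eq_solution[OF fc x] \<open>{0..} \<subseteq> I\<close> that by auto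
  obtain P where "\<forall>y \<in> (\<lambda>t. proj_v v (flow f X t \<xi>)) ` {0..}. norm y \<le> P"
    using bounded unfolding bounded_iff by blast
  then interpret bounded_projected_trajectory K v f X I x P
    using x \<open>{0..} \<subseteq> I\<close> flow_x by unfold_locales (auto simp: is_solution_iff_solves)
  have "\<forall>\<^sub>F t in at_top. proj_v v (flow f X t \<xi>) = proj_v v (x 0)"
    using eventually_ge_at_top[of 0]
  proof eventually_elim
    case (elim t)
    show ?case
      using flow_x[OF elim] projection_constant[OF elim] by (simp only:)
  qed
  then have "((\<lambda>t. proj_v v (flow f X t \<xi>)) \<longlongrightarrow> proj_v v (x 0)) at_top"
    by (rule tendsto_eventually)
  then show "\<exists>e. proj_equilibrium f X v e \<and> ((\<lambda>t. proj_v v (flow f X t \<xi>)) \<longlongrightarrow> e) at_top \<and>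
      (\<forall>e'. proj_equilibrium f X v e' \<longrightarrow> e' = e)"
    using projection_of_start_is_equilibrium proj_equilibrium_unique by blast
qed

end
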